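(* Let $\alpha\in\mathbb{C}$, $s\in\mathbb{C}\setminus\{0\}$, and for index $n$ consider the discrete system for $(f_n,g_n)$ \[ f_{n+1}f_n=\frac{g_n^2-(\alpha+2n)g_n+(\alpha+n)n}{g_n^2},\qquad g_{n-1}+g_n=\frac{(1-\alpha+s-2n)f_n+\alpha+2n+1}{(f_n-1)^2}, \] together with the differential system in $s$ \[ \frac{df}{ds}=\frac{2f^2g-4fg+(\alpha-s+2n)f+2g-\alpha-2n}{s},\qquad \frac{dg}{ds}=\frac{g^2(1-f^2)-(\alpha+2n)g+(\alpha+n)n}{sf}. \] Define the birational change of variables and parameter identification \[ q=\frac{(f-1)(fg-g+n)}{sf},\qquad p=\frac{s(g-n)}{fg-g+n},\qquad t=s, \] \[ a_0=\alpha+n,\quad a_1=-n,\quad a_2=n,\quad a_3=1-\alpha-n \] (so that $a_1+a_2=0$). Then this change of variables simultaneously transforms the discrete system into the special case $a_1+a_2=0$ of the discrete Painlev\'e equation \[ q_{n+1}=1-q_n-\frac{a_0}{p_n+t}-\frac{a_2}{p_n},\qquad p_{n-1}=-p_n-t+\frac{a_1}{q_n}+\frac{a_3}{q_n-1}, \] with parameter evolution $n\mapsto n+1$ given by $(a_0,a_1,a_2,a_3)\mapsto(a_0+1,a_1-1,a_2+1,a_3-1)$, and transforms the differential system into the Hamiltonian system \[ \frac{dq}{dt}=\frac{1}{t}\Big(q(q-1)(2p+t)-a_1(q-1)-a_3q\Big),\qquad \frac{dp}{dt}=\frac{1}{t}\Big(p(p+t)(1-2q)+(a_1+a_3)p-a_2t\Big).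 \]
   Context: The discrete system arises from ladder operators for polynomials orthogonal with respect to the Laguerre weight $x^\alpha e^{-x}$ on $[0,s]$. The Hamiltonian system is a Hamiltonian form of the fifth Painlev\'e equation, with parameters normalised by $a_0+a_1+a_2+a_3=1$. *)

theory Defs
  imports Complex_Main
begin

definition qmap :: "nat \<Rightarrow> complex \<Rightarrow> complex \<Rightarrow> complex \<Rightarrow> complex" where
  "qmap n s f g = (f - 1) * (f * g - g + of_nat n) / (s * f)"

definition pmap :: "nat \<Rightarrow> complex \<Rightarrow> complex \<Rightarrow> complex \<Rightarrow> complex" where
  "pmap n s f g = s * (g - of_nat n) / (f * g - g + of_nat n)"

definition a0 :: "complex \<Rightarrow> nat \<Rightarrow> complex" where "a0 \<alpha> n = \<alpha> + of_nat n"
definition a1 :: "nat \<Rightarrow> complex" where "a1 n = - of_nat n"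
definition a2 :: "nat \<Rightarrow> complex" where "a2 n = of_nat n"
definition a3 :: "complex \<Rightarrow> nat \<Rightarrow> complex" where "a3 \<alpha> n = 1 - \<alpha> - of_nat n"

end

theory Submission
  imports Defs
begin

(* The forward equation factorises as f(n+1) f(n) g(n)^2 = (g(n) - n) (g(n) - alpha - n).
   With B(n) = a3(n+1) - (f(n+1) - 1) g(n) = -(alpha + n) - (f(n+1) - 1) g(n), it gives
   p(n) = s f(n+1) g(n) / B(n), while the backward equation at n+1 gives
   q(n+1) - 1 = (f(n+1) - 1) B(n) / (s f(n+1)). Together with p(n) + s - a1/q(n) = s f(n) / (f(n) - 1),
   which holds by definition, these identities turn into the two discrete Painleve equations.
   The Hamiltonian system is the chain rule followed by a rational identity in f and g. *)

lemma backward_eq_qmap_Suc: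
  fixes \<alpha> s g F G :: complex and n :: nat
  assumes "s \<noteq> 0" "F \<noteq> 0" "F \<noteq> 1"
    and backward: "g + G = ((1 - \<alpha> + s - 2 * of_nat (Suc n)) * F + \<alpha> + 2 * of_nat (Suc n) - 1) / (F - 1) ^ 2"
  shows "qmap (Suc n) s F G - 1 = (F - 1) * (a3 \<alpha> (Suc n) - (F - 1) * g) / (s * F)"
proof -
  have "(F - 1) ^ 2 * G = (1 - \<alpha> + s - 2 * of_nat (Suc n)) * F + \<alpha> + 2 * of_nat (Suc n) - 1 - (F - 1) ^ 2 * g"
    using backward assms(3) by (simp add: field_simps)
  then have "(F - 1) * (F * G - G + of_nat (Suc n)) - s * F = (F - 1) * (a3 \<alpha> (Suc n) - (F - 1) * g)"
    unfolding a3_def by (simp add: algebra_simps power2_eq_square)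
  then show ?thesis
    using assms(1,2) unfolding qmap_def by (simp add: field_simps)
qed

lemma forward_eq_factored:
  fixes \<alpha> f g F :: complex and n :: nat
  assumes "g \<noteq> 0"
    and forward: "F * f = (g ^ 2 - (\<alpha> + 2 * of_nat n) * g + (\<alpha> + of_nat n) * of_nat n) / g ^ 2"
  shows "F * f * g ^ 2 = (g - of_nat n) * (g - a0 \<alpha> n)"
  using forward assms(1) unfolding a0_def by (simp add: field_simps power2_eq_square)

lemma forward_eq_pmap_denominator:
  fixes \<alpha> f g F :: complex and n :: nat
  assumes "F * f * g ^ 2 = (g - of_nat n) * (g - a0 \<alpha> n)"
  shows "F * g * (f * g - g + of_nat n) = (g - of_nat n) * (a3 \<alpha> (Suc n) - (F - 1) * g)"
  using assms unfolding a0_def a3_def by (simp add: algebra_simps power2_eq_square)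

lemma pmap_plus_s:
  fixes s f g :: complex and n :: nat
  assumes "f * g - g + of_nat n \<noteq> 0"
  shows "pmap n s f g + s = s * f * g / (f * g - g + of_nat n)"
  using assms unfolding pmap_def by (simp add: field_simps)

lemma qmap_plus_a0_a2:
  fixes \<alpha> s f g :: complex and n :: nat
  assumes "s \<noteq> 0" "f \<noteq> 0" "g \<noteq> 0" "g \<noteq> of_nat n" "f * g - g + of_nat n \<noteq> 0"
  shows "qmap n s f g + a0 \<alpha> n / (pmap n s f g + s) + a2 n / pmap n s f g
    = (f * g - g + of_nat n) * (f * g ^ 2 - (g - of_nat n) * (g - a0 \<alpha> n)) / (s * f * g * (g - of_nat n))"
proof -
  define h where "h = f * g - g + of_nat n"
  have "h \<noteq> 0" "g - of_nat n \<noteq> 0" using assms unfolding h_def by auto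
  have "qmap n s f g + a0 \<alpha> n / (pmap n s f g + s) + a2 n / pmap n s f g
      = (f - 1) * h / (s * f) + a0 \<alpha> n * h / (s * f * g) + of_nat n * h / (s * (g - of_nat n))"
    unfolding pmap_plus_s[OF assms(5)] unfolding qmap_def pmap_def a2_def h_def[symmetric] by simp
  also have "\<dots> = h * (f * g ^ 2 - (g - of_nat n) * (g - a0 \<alpha> n)) / (s * f * g * (g - of_nat n))"
    using assms(1-3) \<open>g - of_nat n \<noteq> 0\<close> by (simp add: field_simps power2_eq_square)
  finally show ?thesis unfolding h_def .
qed

lemma pmap_plus_s_minus_a1:
  fixes s f g :: complex and n :: nat
  assumes "s \<noteq> 0" "f \<noteq> 0" "f \<noteq> 1" "f * g - g + of_nat n \<noteq> 0"
  shows "pmap n s f g + s - a1 n / qmap n s f g = s * f / (f - 1)"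
proof -
  define h where "h = f * g - g + of_nat n"
  have "h \<noteq> 0" "f - 1 \<noteq> 0" using assms unfolding h_def by auto
  have "pmap n s f g + s - a1 n / qmap n s f g = s * f * ((f - 1) * g + of_nat n) / ((f - 1) * h)"
    unfolding pmap_plus_s[OF assms(4)] qmap_def a1_def h_def[symmetric]
    using assms(1,2) \<open>h \<noteq> 0\<close> \<open>f - 1 \<noteq> 0\<close> by (simp add: field_simps)
  also have "(f - 1) * g + of_nat n = h"
    unfolding h_def by (simp add: algebra_simps)
  finally show ?thesis
    using \<open>h \<noteq> 0\<close> by simp
qed

lemma discrete_forward_step:
  fixes \<alpha> s f g F G :: complex and n :: nat
  assumes "s \<noteq> 0" "f \<noteq> 0" "g \<noteq> 0" "g \<noteq> of_nat n" "f * g - g + of_nat n \<noteq> 0" "F \<noteq> 0" "F \<noteq> 1"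
    and forward: "F * f = (g ^ 2 - (\<alpha> + 2 * of_nat n) * g + (\<alpha> + of_nat n) * of_nat n) / g ^ 2"
    and backward: "g + G = ((1 - \<alpha> + s - 2 * of_nat (Suc n)) * F + \<alpha> + 2 * of_nat (Suc n) - 1) / (F - 1) ^ 2"
  shows "qmap (Suc n) s F G = 1 - qmap n s f g - a0 \<alpha> n / (pmap n s f g + s) - a2 n / pmap n s f g"
proof -
  define h where "h = f * g - g + of_nat n"
  have "g - of_nat n \<noteq> 0" using assms(4) by simp
  have factored: "F * f * g ^ 2 = (g - of_nat n) * (g - a0 \<alpha> n)"
    using forward_eq_factored[OF assms(3) forward] .
  have "qmap (Suc n) s F G - 1 = (F - 1) * (a3 \<alpha> (Suc n) - (F - 1) * g) / (s * F)"
    using backward_eq_qmap_Suc[OF assms(1,6,7) backward] .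
  also have "a3 \<alpha> (Suc n) - (F - 1) * g = F * g * h / (g - of_nat n)"
    using forward_eq_pmap_denominator[OF factored] \<open>g - of_nat n \<noteq> 0\<close>
    unfolding h_def by (simp add: eq_divide_eq mult.commute)
  also have "(F - 1) * (F * g * h / (g - of_nat n)) / (s * F) = (F - 1) * g * h / (s * (g - of_nat n))"
    using assms(6) by (simp add: ac_simps)
  also have "\<dots> = - (h * (f * g ^ 2 - (g - of_nat n) * (g - a0 \<alpha> n)) / (s * f * g * (g - of_nat n)))"
    unfolding factored[symmetric] using assms(1-3) \<open>g - of_nat n \<noteq> 0\<close>
    by (simp add: field_simps power2_eq_square)
  also have "\<dots> = - (qmap n s f g + a0 \<alpha> n / (pmap n s f g + s) + a2 n / pmap n s f g)"
    unfolding h_def using qmap_plus_a0_a2[OF assms(1-5)] by simp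
  finally show ?thesis by (simp add: algebra_simps)
qed

lemma discrete_backward_step:
  fixes \<alpha> s f g F G :: complex and n :: nat
  assumes "s \<noteq> 0" "g \<noteq> 0" "f * g - g + of_nat n \<noteq> 0"
    and "F \<noteq> 0" "F \<noteq> 1" "F * G - G + of_nat (Suc n) \<noteq> 0" "qmap (Suc n) s F G \<noteq> 1"
    and forward: "F * f = (g ^ 2 - (\<alpha> + 2 * of_nat n) * g + (\<alpha> + of_nat n) * of_nat n) / g ^ 2"
    and backward: "g + G = ((1 - \<alpha> + s - 2 * of_nat (Suc n)) * F + \<alpha> + 2 * of_nat (Suc n) - 1) / (F - 1) ^ 2"
  shows "pmap n s f g = - pmap (Suc n) s F G - s + a1 (Suc n) / qmap (Suc n) s F G
    + a3 \<alpha> (Suc n) / (qmap (Suc n) s F G - 1)"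
proof -
  define B where "B = a3 \<alpha> (Suc n) - (F - 1) * g"
  have q_Suc: "qmap (Suc n) s F G - 1 = (F - 1) * B / (s * F)"
    unfolding B_def using backward_eq_qmap_Suc[OF assms(1,4,5) backward] .
  have "B \<noteq> 0" using q_Suc assms(7) by auto
  have denom: "F * g * (f * g - g + of_nat n) = (g - of_nat n) * B"
    unfolding B_def using forward_eq_pmap_denominator[OF forward_eq_factored[OF assms(2) forward]] .
  then have "g - of_nat n \<noteq> 0" using assms(2-4) by auto
  have "f * g - g + of_nat n = (g - of_nat n) * B / (F * g)"
    using denom assms(2,4) by (simp add: eq_divide_eq ac_simps)
  then have "pmap n s f g = s * F * g / B"
    unfolding pmap_def using assms(2,4) \<open>g - of_nat n \<noteq> 0\<close> by simp
  also have "\<dots> = - (s * F / (F - 1)) + (B + (F - 1) * g) * (s * F) / ((F - 1) * B)"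
    using assms(5) \<open>B \<noteq> 0\<close> by (simp add: distrib_right add_divide_distrib)
  also have "B + (F - 1) * g = a3 \<alpha> (Suc n)"
    unfolding B_def by simp
  also have "- (s * F / (F - 1)) + a3 \<alpha> (Suc n) * (s * F) / ((F - 1) * B)
    = - pmap (Suc n) s F G - s + a1 (Suc n) / qmap (Suc n) s F G
      + a3 \<alpha> (Suc n) / (qmap (Suc n) s F G - 1)"
    using pmap_plus_s_minus_a1[OF assms(1,4,5,6)] q_Suc by (simp add: algebra_simps)
  finally show ?thesis .
qed

lemma discrete_system_to_dPV:
  fixes \<alpha> s :: complex and f g :: "nat \<Rightarrow> complex"
  assumes "s \<noteq> 0"
    and nondeg: "\<forall>n. f n \<noteq> 0 \<and> f n \<noteq> 1 \<and> g n \<noteq> 0 \<and> g n \<noteq> of_nat n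
      \<and> f n * g n - g n + of_nat n \<noteq> 0 \<and> qmap n s (f n) (g n) \<noteq> 1"
    and forward: "\<forall>n. f (Suc n) * f n
      = (g n ^ 2 - (\<alpha> + 2 * of_nat n) * g n + (\<alpha> + of_nat n) * of_nat n) / g n ^ 2"
    and backward: "\<forall>n\<ge>1. g (n - 1) + g n
      = ((1 - \<alpha> + s - 2 * of_nat n) * f n + \<alpha> + 2 * of_nat n - 1) / (f n - 1) ^ 2"
  shows "qmap (Suc n) s (f (Suc n)) (g (Suc n))
      = 1 - qmap n s (f n) (g n) - a0 \<alpha> n / (pmap n s (f n) (g n) + s) - a2 n / pmap n s (f n) (g n)"
    and "n \<ge> 1 \<Longrightarrow> pmap (n - 1) s (f (n - 1)) (g (n - 1))
      = - pmap n s (f n) (g n) - s + a1 n / qmap n s (f n) (g n) + a3 \<alpha> n / (qmap n s (f n) (g n) - 1)"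
proof -
  have backward_Suc: "g m + g (Suc m) = ((1 - \<alpha> + s - 2 * of_nat (Suc m)) * f (Suc m)
      + \<alpha> + 2 * of_nat (Suc m) - 1) / (f (Suc m) - 1) ^ 2" for m
    using backward by (metis diff_Suc_1 le_add1 plus_1_eq_Suc)
  show "qmap (Suc n) s (f (Suc n)) (g (Suc n))
      = 1 - qmap n s (f n) (g n) - a0 \<alpha> n / (pmap n s (f n) (g n) + s) - a2 n / pmap n s (f n) (g n)"
    using discrete_forward_step[OF \<open>s \<noteq> 0\<close> _ _ _ _ _ _ forward[rule_format] backward_Suc]
      nondeg by blast
  assume "n \<ge> 1"
  then obtain m where "n = Suc m" by (cases n) auto
  moreover have "pmap m s (f m) (g m) = - pmap (Suc m) s (f (Suc m)) (g (Suc m)) - s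
      + a1 (Suc m) / qmap (Suc m) s (f (Suc m)) (g (Suc m))
      + a3 \<alpha> (Suc m) / (qmap (Suc m) s (f (Suc m)) (g (Suc m)) - 1)"
    using discrete_backward_step[OF \<open>s \<noteq> 0\<close> _ _ _ _ _ _ forward[rule_format] backward_Suc]
      nondeg by blast
  ultimately show "pmap (n - 1) s (f (n - 1)) (g (n - 1))
      = - pmap n s (f n) (g n) - s + a1 n / qmap n s (f n) (g n) + a3 \<alpha> n / (qmap n s (f n) (g n) - 1)"
    by simp
qed

lemma qmap_has_field_derivative:
  fixes f g :: "complex \<Rightarrow> complex" and n :: nat
  assumes "(f has_field_derivative f') (at t)" "(g has_field_derivative g') (at t)" "t \<noteq> 0" "f t \<noteq> 0"
  shows "((\<lambda>t. qmap n t (f t) (g t)) has_field_derivative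
    (f' * (f t * g t - g t + of_nat n) + (f t - 1) * (f' * g t + (f t - 1) * g')
      - qmap n t (f t) (g t) * (f t + t * f')) / (t * f t)) (at t)"
  using assms unfolding qmap_def
  by (auto intro!: derivative_eq_intros simp: field_simps power2_eq_square)

lemma pmap_has_field_derivative:
  fixes f g :: "complex \<Rightarrow> complex" and n :: nat
  assumes "(f has_field_derivative f') (at t)" "(g has_field_derivative g') (at t)"
    "f t * g t - g t + of_nat n \<noteq> 0"
  shows "((\<lambda>t. pmap n t (f t) (g t)) has_field_derivative
    (g t - of_nat n + t * g' - pmap n t (f t) (g t) * (f' * g t + (f t - 1) * g'))
      / (f t * g t - g t + of_nat n)) (at t)"
  using assms unfolding pmap_def
  by (auto intro!: derivative_eq_intros simp: field_simps power2_eq_square)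

lemma qmap_derivative_eq_hamiltonian:
  fixes \<alpha> t f g f' g' :: complex and n :: nat
  assumes "t \<noteq> 0" "f \<noteq> 0" "f * g - g + of_nat n \<noteq> 0"
    and f': "f' = (2 * f ^ 2 * g - 4 * f * g + (\<alpha> - t + 2 * of_nat n) * f + 2 * g - \<alpha> - 2 * of_nat n) / t"
    and g': "g' = (g ^ 2 * (1 - f ^ 2) - (\<alpha> + 2 * of_nat n) * g + (\<alpha> + of_nat n) * of_nat n) / (t * f)"
  shows "(f' * (f * g - g + of_nat n) + (f - 1) * (f' * g + (f - 1) * g') - qmap n t f g * (f + t * f')) / (t * f)
    = (qmap n t f g * (qmap n t f g - 1) * (2 * pmap n t f g + t) - a1 n * (qmap n t f g - 1) - a3 \<alpha> n * qmap n t f g) / t"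
proof -
  \<comment> \<open>h is kept abstract so that field_simps can use h \<noteq> 0 to clear it as a denominator\<close>
  define h where "h = f * g - g + of_nat n"
  have "h \<noteq> 0" using assms(3) unfolding h_def .
  have "(f' * h + (f - 1) * (f' * g + (f - 1) * g') - (f - 1) * h / (t * f) * (f + t * f')) / (t * f)
    = ((f - 1) * h / (t * f) * ((f - 1) * h / (t * f) - 1) * (2 * (t * (g - of_nat n) / h) + t)
       + of_nat n * ((f - 1) * h / (t * f) - 1) - (1 - \<alpha> - of_nat n) * ((f - 1) * h / (t * f))) / t"
    unfolding f' g' using assms(1,2) \<open>h \<noteq> 0\<close>
    by (simp add: field_simps) (unfold h_def, algebra)
  then show ?thesis
    unfolding qmap_def pmap_def a1_def a3_def h_def by simp
qed

lemma pmap_derivative_eq_hamiltonian: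
  fixes \<alpha> t f g f' g' :: complex and n :: nat
  assumes "t \<noteq> 0" "f \<noteq> 0" "f * g - g + of_nat n \<noteq> 0"
    and f': "f' = (2 * f ^ 2 * g - 4 * f * g + (\<alpha> - t + 2 * of_nat n) * f + 2 * g - \<alpha> - 2 * of_nat n) / t"
    and g': "g' = (g ^ 2 * (1 - f ^ 2) - (\<alpha> + 2 * of_nat n) * g + (\<alpha> + of_nat n) * of_nat n) / (t * f)"
  shows "(g - of_nat n + t * g' - pmap n t f g * (f' * g + (f - 1) * g')) / (f * g - g + of_nat n)
    = (pmap n t f g * (pmap n t f g + t) * (1 - 2 * qmap n t f g) + (a1 n + a3 \<alpha> n) * pmap n t f g - a2 n * t) / t"
proof -
  define h where "h = f * g - g + of_nat n"
  have "h \<noteq> 0" using assms(3) unfolding h_def .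
  have "(g - of_nat n + t * g' - t * (g - of_nat n) / h * (f' * g + (f - 1) * g')) / h
    = (t * (g - of_nat n) / h * (t * (g - of_nat n) / h + t) * (1 - 2 * ((f - 1) * h / (t * f)))
       + (1 - \<alpha> - 2 * of_nat n) * (t * (g - of_nat n) / h) - of_nat n * t) / t"
    unfolding f' g' using assms(1,2) \<open>h \<noteq> 0\<close>
    by (simp add: field_simps) (unfold h_def, algebra)
  then show ?thesis
    unfolding qmap_def pmap_def a1_def a2_def a3_def h_def by (simp add: diff_diff_eq)
qed

lemma differential_system_to_hamiltonian:
  fixes \<alpha> t :: complex and f g :: "complex \<Rightarrow> complex" and n :: nat
  assumes "t \<noteq> 0" "f t \<noteq> 0" "f t * g t - g t + of_nat n \<noteq> 0"
    and df: "(f has_field_derivative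
      (2 * f t ^ 2 * g t - 4 * f t * g t + (\<alpha> - t + 2 * of_nat n) * f t + 2 * g t - \<alpha> - 2 * of_nat n) / t) (at t)"
    and dg: "(g has_field_derivative
      (g t ^ 2 * (1 - f t ^ 2) - (\<alpha> + 2 * of_nat n) * g t + (\<alpha> + of_nat n) * of_nat n) / (t * f t)) (at t)"
  shows "((\<lambda>t. qmap n t (f t) (g t)) has_field_derivative
      (let q = qmap n t (f t) (g t); p = pmap n t (f t) (g t) in
        (q * (q - 1) * (2 * p + t) - a1 n * (q - 1) - a3 \<alpha> n * q) / t)) (at t)"
    and "((\<lambda>t. pmap n t (f t) (g t)) has_field_derivative
      (let q = qmap n t (f t) (g t); p = pmap n t (f t) (g t) in
        (p * (p + t) * (1 - 2 * q) + (a1 n + a3 \<alpha> n) * p - a2 n * t) / t)) (at t)"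
  unfolding Let_def
  using DERIV_cong[OF qmap_has_field_derivative[OF df dg assms(1,2)]
      qmap_derivative_eq_hamiltonian[OF assms(1-3) refl refl]]
    DERIV_cong[OF pmap_has_field_derivative[OF df dg assms(3)]
      pmap_derivative_eq_hamiltonian[OF assms(1-3) refl refl]]
  by blast+

theorem proposition4p11:
  fixes \<alpha> :: complex
  shows
    \<comment> \<open>parameter normalisation, special case a1 + a2 = 0, and evolution n to n+1\<close>
    "(\<forall>n. a0 \<alpha> n + a1 n + a2 n + a3 \<alpha> n = 1 \<and> a1 n + a2 n = 0 \<and>
          a0 \<alpha> (Suc n) = a0 \<alpha> n + 1 \<and> a1 (Suc n) = a1 n - 1 \<and>
          a2 (Suc n) = a2 n + 1 \<and> a3 \<alpha> (Suc n) = a3 \<alpha> n - 1)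
     \<and>
    \<comment> \<open>discrete system is mapped to the discrete Painleve equation\<close>
     (\<forall>(s::complex) (f::nat \<Rightarrow> complex) (g::nat \<Rightarrow> complex).
        s \<noteq> 0
        \<and> (\<forall>n. f n \<noteq> 0 \<and> f n \<noteq> 1 \<and> g n \<noteq> 0 \<and> g n \<noteq> of_nat n
               \<and> f n * g n - g n + of_nat n \<noteq> 0 \<and> qmap n s (f n) (g n) \<noteq> 1)
        \<and> (\<forall>n. f (Suc n) * f n
                 = (g n ^ 2 - (\<alpha> + 2 * of_nat n) * g n + (\<alpha> + of_nat n) * of_nat n) / g n ^ 2)
        \<and> (\<forall>n\<ge>1. g (n - 1) + g n
                 = ((1 - \<alpha> + s - 2 * of_nat n) * f n + \<alpha> + 2 * of_nat n - 1) / (f n - 1) ^ 2)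
      \<longrightarrow>
        (\<forall>n. qmap (Suc n) s (f (Suc n)) (g (Suc n))
               = 1 - qmap n s (f n) (g n)
                   - a0 \<alpha> n / (pmap n s (f n) (g n) + s)
                   - a2 n / pmap n s (f n) (g n))
      \<and> (\<forall>n\<ge>1. pmap (n - 1) s (f (n - 1)) (g (n - 1))
               = - pmap n s (f n) (g n) - s
                 + a1 n / qmap n s (f n) (g n)
                 + a3 \<alpha> n / (qmap n s (f n) (g n) - 1)))
     \<and>
    \<comment> \<open>differential system in s is mapped to the Hamiltonian system (t = s)\<close>
     (\<forall>(n::nat) (S::complex set) (f::complex \<Rightarrow> complex) (g::complex \<Rightarrow> complex).
        open S \<and> 0 \<notin> S
        \<and> (\<forall>s\<in>S. f s \<noteq> 0 \<and> f s * g s - g s + of_nat n \<noteq> 0)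
        \<and> (\<forall>s\<in>S. (f has_field_derivative
               (2 * f s ^ 2 * g s - 4 * f s * g s + (\<alpha> - s + 2 * of_nat n) * f s
                + 2 * g s - \<alpha> - 2 * of_nat n) / s) (at s))
        \<and> (\<forall>s\<in>S. (g has_field_derivative
               (g s ^ 2 * (1 - f s ^ 2) - (\<alpha> + 2 * of_nat n) * g s
                + (\<alpha> + of_nat n) * of_nat n) / (s * f s)) (at s))
      \<longrightarrow>
        (\<forall>t\<in>S.
           ((\<lambda>t. qmap n t (f t) (g t)) has_field_derivative
              (let q = qmap n t (f t) (g t); p = pmap n t (f t) (g t) in
                 (q * (q - 1) * (2 * p + t) - a1 n * (q - 1) - a3 \<alpha> n * q) / t)) (at t)
         \<and> ((\<lambda>t. pmap n t (f t) (g t)) has_field_derivative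
              (let q = qmap n t (f t) (g t); p = pmap n t (f t) (g t) in
                 (p * (p + t) * (1 - 2 * q) + (a1 n + a3 \<alpha> n) * p - a2 n * t) / t)) (at t)))"
proof ((intro conjI allI impI ballI; (elim conjE)?), goal_cases)
  case (7 s f g n)
  then show ?case by (rule discrete_system_to_dPV(1))
next
  case (8 s f g n)
  then show ?case by (intro discrete_system_to_dPV(2)) simp_all
next
  case (9 n S f g t)
  then show ?case by (intro differential_system_to_hamiltonian(1)) auto
next
  case (10 n S f g t)
  then show ?case by (intro differential_system_to_hamiltonian(2)) auto
qed (simp_all add: a0_def a1_def a2_def a3_def)

end
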